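(* In the setting of the context (with assumptions (A.1)–(A.3)), let $\{(u_k,v_k)\}$, $\{(z_k,w_k)\}$, $\{\gamma_k\}$, $\{\rho_k\}$ be generated by the Projective Method of Multipliers (PMM), and define for $k\ge1$ $$x_k=z_{k-1}+\lambda w_{k-1}+\lambda(Cv_k-d),\quad b_k=d-Cv_k,\quad y_k=x_k-\lambda(w_{k-1}-Mu_k),\quad a_k=-Mu_k.$$ Then for every iteration $k\ge1$ that reaches step 3: (i) $b_k\in\partial h_2(x_k)$ and $\lambda b_k+x_k=z_{k-1}+\lambda w_{k-1}$; (ii) $a_k\in\partial h_1(y_k)$ and $\lambda a_k+y_k=(1-\alpha)z_{k-1}+\alpha x_k-\lambda w_{k-1}$ with $\alpha=1$; (iii) $\gamma_k=\dfrac{\langle z_{k-1}-x_k,b_k-w_{k-1}\rangle+\langle z_{k-1}-y_k,a_k+w_{k-1}\rangle}{\|a_k+b_k\|^2+\|x_k-y_k\|^2}$; (iv) $z_k=z_{k-1}-\rho_k\gamma_k(a_k+b_k)$ and $w_k=w_{k-1}-\rho_k\gamma_k(x_k-y_k)$. That is, the PMM is the instance of the Eckstein–Svaiter projective splitting recursion applied to $\partial h_1,\partial h_2$ with parameters $\lambda_k=\mu_k=\lambda$ and $\alpha_k=1$ (which satisfy $\mu_k/\lambda_k-(\alpha_k/2)^2>0$).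
   Context: Let $f:\mathbb{R}^{m_1}\to(-\infty,\infty]$, $g:\mathbb{R}^{m_2}\to(-\infty,\infty]$ be proper closed convex, $M:\mathbb{R}^{m_1}\to\mathbb{R}^n$, $C:\mathbb{R}^{m_2}\to\mathbb{R}^n$ linear, $d\in\mathbb{R}^n$; consider $\min\{f(u)+g(v):Mu+Cv=d\}$ with Lagrangian $L(u,v,z)=f(u)+g(v)+\langle Mu+Cv-d,z\rangle$. A saddle point is $(u^*,v^*,z^* )$ with $L(u^*,v^*,z^* )$ finite and $\min_{(u,v)}L(u,v,z^* )=L(u^*,v^*,z^* )=\max_zL(u^*,v^*,z)$. Let $h_1(z)=f^*(-M^*z)$, $h_2(z)=g^*(-C^*z)+\langle d,z\rangle$ ($^*$ on functions = Fenchel conjugate, on operators = adjoint). Standing assumptions: (A.1) $L$ has a saddle point; (A.2) $\mathrm{ri}(\mathrm{dom} f^* )\cap\mathrm{range}(M^* )\ne\emptyset$; (A.3) $\mathrm{ri}(\mathrm{dom} g^* )\cap\mathrm{range}(C^* )\ne\emptyset$. PMM: given $(z_0,w_0)\in\mathbb{R}^n\times\mathbb{R}^n$, $\lambda>0$, $\bar\rho\in[0,1)$, for $k=1,2,\dots$: (1) let $v_k$ be a minimizer of $g(v)+\langle z_{k-1}+\lambda w_{k-1},Cv-d\rangle+\frac\lambda2\|Cv-d\|^2$ and $u_k$ a minimizer of $f(u)+\langle z_{k-1}+\lambda(Cv_k-d),Mu\rangle+\frac\lambda2\|Mu\|^2$; (2) if $\|Mu_k+Cv_k-d\|+\|Mu_k-w_{k-1}\|=0$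 stop; otherwise set $\gamma_k=\dfrac{\lambda\|Cv_k-d+w_{k-1}\|^2+\lambda\langle d-Cv_k-Mu_k,w_{k-1}-Mu_k\rangle}{\|Mu_k+Cv_k-d\|^2+\lambda^2\|Mu_k-w_{k-1}\|^2}$; (3) choose $\rho_k\in[1-\bar\rho,1+\bar\rho]$ and set $z_k=z_{k-1}+\rho_k\gamma_k(Mu_k+Cv_k-d)$, $w_k=w_{k-1}-\rho_k\gamma_k\lambda(w_{k-1}-Mu_k)$. *)

theory Defs
  imports "HOL-Analysis.Analysis" "HOL-Library.Extended_Real"
begin

text \<open>Extended-real-valued functions f :: 'a => ereal model maps into (-inf, +inf].\<close>

definition epigraph :: "('a::real_normed_vector \<Rightarrow> ereal) \<Rightarrow> ('a \<times> real) set" where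
  "epigraph f = {(x, t). f x \<le> ereal t}"

definition effdom :: "('a \<Rightarrow> ereal) \<Rightarrow> 'a set" where
  "effdom f = {x. f x < \<infinity>}"

definition proper_fun :: "('a \<Rightarrow> ereal) \<Rightarrow> bool" where
  "proper_fun f \<longleftrightarrow> (\<forall>x. f x \<noteq> -\<infinity>) \<and> (\<exists>x. f x < \<infinity>)"

definition proper_closed_convex :: "('a::real_normed_vector \<Rightarrow> ereal) \<Rightarrow> bool" where
  "proper_closed_convex f \<longleftrightarrow> proper_fun f \<and> convex (epigraph f) \<and> closed (epigraph f)"

definition fconj :: "('a::real_inner \<Rightarrow> ereal) \<Rightarrow> 'a \<Rightarrow> ereal" where
  "fconj f y = (SUP x. ereal (inner x y) - f x)"

definition subdiff :: "('a::real_inner \<Rightarrow> ereal) \<Rightarrow> 'a \<Rightarrow> 'a set" where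
  "subdiff h x = {s. \<bar>h x\<bar> \<noteq> \<infinity> \<and> (\<forall>y. h x + ereal (inner s (y - x)) \<le> h y)}"

definition lagrangian ::
  "('a \<Rightarrow> ereal) \<Rightarrow> ('b \<Rightarrow> ereal) \<Rightarrow> ('a \<Rightarrow> 'c::real_inner) \<Rightarrow> ('b \<Rightarrow> 'c) \<Rightarrow> 'c
     \<Rightarrow> 'a \<Rightarrow> 'b \<Rightarrow> 'c \<Rightarrow> ereal" where
  "lagrangian f g M C d u v z = f u + g v + ereal (inner (M u + C v - d) z)"

definition is_saddle_point ::
  "('a \<Rightarrow> ereal) \<Rightarrow> ('b \<Rightarrow> ereal) \<Rightarrow> ('a \<Rightarrow> 'c::real_inner) \<Rightarrow> ('b \<Rightarrow> 'c) \<Rightarrow> 'c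
     \<Rightarrow> 'a \<Rightarrow> 'b \<Rightarrow> 'c \<Rightarrow> bool" where
  "is_saddle_point f g M C d us vs zs \<longleftrightarrow>
     \<bar>lagrangian f g M C d us vs zs\<bar> \<noteq> \<infinity> \<and>
     (INF p. lagrangian f g M C d (fst p) (snd p) zs) = lagrangian f g M C d us vs zs \<and>
     lagrangian f g M C d us vs zs = (SUP z. lagrangian f g M C d us vs z)"

end

theory Submission
  imports Defs
begin

text \<open>The optimality condition of the g-subproblem says that -C'x_k is a subgradient of g at v_k,
and that of the f-subproblem that -M'y_k is a subgradient of f at u_k (with C', M' the adjoints).
By the equality case of Fenchel--Young, v_k and u_k are then subgradients of the conjugates at these
points, and the chain rule for the linear maps -C' and -M' (plus the linear term <d, .> in h2)
yields b_k in the subdifferential of h2 at x_k and a_k in that of h1 at y_k.\<close>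

lemma nonpos_if_le_scaled:
  fixes D c :: real
  assumes "\<And>t. 0 < t \<Longrightarrow> t \<le> 1 \<Longrightarrow> D \<le> t * c"
  shows "D \<le> 0"
proof (rule ccontr)
  assume "\<not> D \<le> 0"
  hence D: "D > 0" by simp
  show False
  proof (cases "c \<le> 0")
    case True
    with assms[of 1] D show False by simp
  next
    case False
    define t where "t = min 1 (D / (2 * c))"
    have t: "0 < t" "t \<le> 1" using D False by (simp_all add: t_def)
    have "t * c \<le> D / (2 * c) * c" using False by (intro mult_right_mono) (auto simp: t_def)
    also have "\<dots> = D / 2" using False by simp
    finally show False using assms[OF t] D by simp
  qed
qed

lemma convex_epigraph_le:
  fixes F :: "'a::real_normed_vector \<Rightarrow> ereal"
  assumes "convex (epigraph F)" "F a = ereal fa" "F b = ereal fb" "0 \<le> t" "t \<le> 1"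
  shows "F ((1 - t) *\<^sub>R a + t *\<^sub>R b) \<le> ereal ((1 - t) * fa + t * fb)"
proof -
  have "(a, fa) \<in> epigraph F" "(b, fb) \<in> epigraph F" by (simp_all add: epigraph_def assms)
  then have "(1 - t) *\<^sub>R (a, fa) + t *\<^sub>R (b, fb) \<in> epigraph F"
    using convexD_alt assms by blast
  thus ?thesis by (simp add: epigraph_def)
qed

lemma proper_minimizer_finite:
  assumes "proper_fun F" and min: "\<forall>v'. F v + ereal (\<phi> v) \<le> F v' + ereal (\<phi> v')"
  shows "\<bar>F v\<bar> \<noteq> \<infinity>"
proof -
  obtain x0 where x0: "F x0 < \<infinity>" and ninf: "F v \<noteq> -\<infinity>"
    using assms(1) by (auto simp: proper_fun_def)
  have "F v + ereal (\<phi> v) \<le> F x0 + ereal (\<phi> x0)" using min by blast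
  also have "\<dots> < \<infinity>" using x0 by simp
  finally show ?thesis using ninf by auto
qed

lemma quadratic_along_line:
  fixes q P R :: "'a::real_inner"
  shows "inner q (P + t *\<^sub>R R) + lam / 2 * (norm (P + t *\<^sub>R R))\<^sup>2
       = inner q P + lam / 2 * (norm P)\<^sup>2 + t * inner R (q + lam *\<^sub>R P) + t * (t * (lam / 2 * (norm R)\<^sup>2))"
  unfolding power2_norm_eq_inner
  by (simp add: inner_add inner_commute power2_eq_square algebra_simps)

lemma subgradient_of_quadratic_minimizer:
  fixes F :: "'a::euclidean_space \<Rightarrow> ereal" and K :: "'a \<Rightarrow> 'c::euclidean_space"
  assumes F: "proper_fun F" and cvx: "convex (epigraph F)"
    and K: "linear K" and T: "\<And>x. T x = K x + e"
    and min: "\<forall>v'. F v + ereal (inner q (T v) + lam / 2 * (norm (T v))\<^sup>2)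
                 \<le> F v' + ereal (inner q (T v') + lam / 2 * (norm (T v'))\<^sup>2)"
  shows "- adjoint K (q + lam *\<^sub>R T v) \<in> subdiff F v"
proof -
  have prp: "\<And>x. F x \<noteq> -\<infinity>"
    using F by (simp add: proper_fun_def)
  have "\<bar>F v\<bar> \<noteq> \<infinity>"
    using F min by (rule proper_minimizer_finite)
  then obtain fv where fv: "F v = ereal fv" by auto
  define y where "y = q + lam *\<^sub>R T v"
  have "ereal (fv + inner (- adjoint K y) (v' - v)) \<le> F v'" for v'
  proof (cases "F v'")
    case (real fv')
    define R where "R = K (v' - v)"
    have "fv - fv' - inner R y \<le> t * (lam / 2 * (norm R)\<^sup>2)" if t: "0 < t" "t \<le> 1" for t
    proof -
      have Tvt: "T ((1 - t) *\<^sub>R v + t *\<^sub>R v') = T v + t *\<^sub>R R"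
        unfolding R_def T using K by (simp add: linear_add linear_scale linear_diff algebra_simps)
      have "ereal (fv + (inner q (T v) + lam / 2 * (norm (T v))\<^sup>2))
          \<le> F ((1 - t) *\<^sub>R v + t *\<^sub>R v') + ereal (inner q (T v + t *\<^sub>R R) + lam / 2 * (norm (T v + t *\<^sub>R R))\<^sup>2)"
        using min fv Tvt by (metis plus_ereal.simps(1))
      also have "\<dots> \<le> ereal ((1 - t) * fv + t * fv') + ereal (inner q (T v + t *\<^sub>R R) + lam / 2 * (norm (T v + t *\<^sub>R R))\<^sup>2)"
        using convex_epigraph_le[OF cvx fv real] t by (intro add_right_mono) simp
      finally have "t * (fv - fv' - inner R y) \<le> t * (t * (lam / 2 * (norm R)\<^sup>2))"
        unfolding quadratic_along_line y_def by (simp add: algebra_simps)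
      thus ?thesis using t by simp
    qed
    then have "fv - fv' - inner R y \<le> 0" by (rule nonpos_if_le_scaled)
    moreover have "inner (- adjoint K y) (v' - v) = - inner R y"
      unfolding R_def using adjoint_works[OF K, of "v' - v" y] by (simp add: inner_commute)
    ultimately show ?thesis using real by simp
  qed (use prp in auto)
  thus ?thesis using fv unfolding subdiff_def y_def by simp
qed

lemma subdiff_fconj_if_subdiff:
  fixes F :: "'a::real_inner \<Rightarrow> ereal"
  assumes "s \<in> subdiff F v"
  shows "v \<in> subdiff (fconj F) s"
proof -
  obtain fv where fv: "F v = ereal fv" and sg: "\<forall>v'. ereal (fv + inner s (v' - v)) \<le> F v'"
    using assms by (cases "F v") (auto simp: subdiff_def)
  have lower: "ereal (inner v s' - fv) \<le> fconj F s'" for s'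
    unfolding fconj_def by (rule SUP_upper2[of v]) (auto simp: fv)
  have "fconj F s \<le> ereal (inner v s - fv)"
    unfolding fconj_def
  proof (rule SUP_least)
    fix x
    have sx: "ereal (fv + inner s (x - v)) \<le> F x" using sg by blast
    show "ereal (inner x s) - F x \<le> ereal (inner v s - fv)"
    proof (cases "F x")
      case (real r)
      with sx show ?thesis by (simp add: inner_diff inner_commute)
    qed (use sx in auto)
  qed
  then have conj: "fconj F s = ereal (inner v s - fv)" using lower[of s] by simp
  have "fconj F s + ereal (inner v (s' - s)) \<le> fconj F s'" for s'
    using lower[of s'] by (simp add: conj inner_diff_right)
  then show ?thesis by (simp add: subdiff_def conj)
qed

lemma subdiff_comp_neg_adjoint:
  fixes \<phi> :: "'a::euclidean_space \<Rightarrow> ereal" and K :: "'a \<Rightarrow> 'c::euclidean_space"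
  assumes K: "linear K" and s: "s \<in> subdiff \<phi> (- adjoint K p)"
  shows "- K s \<in> subdiff (\<lambda>p. \<phi> (- adjoint K p)) p"
proof -
  have "inner (- K s) (p' - p) = inner s (- adjoint K p' - - adjoint K p)" for p'
    using adjoint_works[OF K, of s "p' - p"] adjoint_linear[OF K]
    by (simp add: inner_commute linear_diff inner_diff_left inner_diff_right)
  moreover have "\<phi> (- adjoint K p) + ereal (inner s (- adjoint K p' - - adjoint K p)) \<le> \<phi> (- adjoint K p')" for p'
    using s unfolding subdiff_def by blast
  ultimately show ?thesis using s by (simp add: subdiff_def)
qed

lemma subdiff_add_inner:
  fixes h :: "'a::real_inner \<Rightarrow> ereal"
  assumes "s \<in> subdiff h p"
  shows "s + e \<in> subdiff (\<lambda>p. h p + ereal (inner e p)) p"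
proof -
  obtain hp where hp: "h p = ereal hp" and sg: "\<forall>p'. ereal (hp + inner s (p' - p)) \<le> h p'"
    using assms by (cases "h p") (auto simp: subdiff_def)
  have "ereal (hp + inner e p + inner (s + e) (p' - p)) \<le> h p' + ereal (inner e p')" for p'
  proof -
    have "ereal (hp + inner e p + inner (s + e) (p' - p)) = ereal (hp + inner s (p' - p)) + ereal (inner e p')"
      by (simp add: inner_add_left inner_diff_right)
    also have "\<dots> \<le> h p' + ereal (inner e p')" using sg by (intro add_right_mono) blast
    finally show ?thesis .
  qed
  then show ?thesis by (simp add: subdiff_def hp)
qed

lemma projective_stepsize_eq:
  fixes z w a b :: "'a::real_inner"
  assumes x: "x = z + lam *\<^sub>R w - lam *\<^sub>R b" and y: "y = x - lam *\<^sub>R (w + a)"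
  shows "(inner (z - x) (b - w) + inner (z - y) (a + w)) / ((norm (a + b))\<^sup>2 + (norm (x - y))\<^sup>2)
       = (lam * (norm (b - w))\<^sup>2 + lam * inner (a + b) (w + a))
         / ((norm (a + b))\<^sup>2 + lam\<^sup>2 * (norm (w + a))\<^sup>2)"
proof -
  have "z - x = lam *\<^sub>R (b - w)" "z - y = lam *\<^sub>R (a + b)" "x - y = lam *\<^sub>R (w + a)"
    by (simp_all add: x y algebra_simps)
  then show ?thesis
    by (simp add: power2_norm_eq_inner inner_commute add.commute power_mult_distrib)
qed

theorem mainTheorem3:
  fixes f :: "'a::euclidean_space \<Rightarrow> ereal" and g :: "'b::euclidean_space \<Rightarrow> ereal"
    and M :: "'a \<Rightarrow> 'c::euclidean_space" and C :: "'b \<Rightarrow> 'c" and d :: 'c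
    and u :: "nat \<Rightarrow> 'a" and v :: "nat \<Rightarrow> 'b" and z w :: "nat \<Rightarrow> 'c"
    and \<gamma> \<rho> :: "nat \<Rightarrow> real" and lam \<rho>bar :: real
    and h1 h2 :: "'c \<Rightarrow> ereal"
  assumes f: "proper_closed_convex f" and g: "proper_closed_convex g"
    and M: "linear M" and C: "linear C"
    and h1: "h1 = (\<lambda>p. fconj f (- adjoint M p))"
    and h2: "h2 = (\<lambda>p. fconj g (- adjoint C p) + ereal (inner d p))"
    and A1: "\<exists>us vs zs. is_saddle_point f g M C d us vs zs"
    and A2: "rel_interior (effdom (fconj f)) \<inter> range (adjoint M) \<noteq> {}"
    and A3: "rel_interior (effdom (fconj g)) \<inter> range (adjoint C) \<noteq> {}"
    and lam: "lam > 0" and rhobar: "0 \<le> \<rho>bar" "\<rho>bar < 1"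
    and PMM: "\<And>k. 1 \<le> k \<Longrightarrow>
        (\<forall>j\<in>{1..<k}. norm (M (u j) + C (v j) - d) + norm (M (u j) - w (j - 1)) \<noteq> 0) \<Longrightarrow>
        (\<forall>v'. g (v k) + ereal (inner (z (k - 1) + lam *\<^sub>R w (k - 1)) (C (v k) - d)
                          + lam / 2 * (norm (C (v k) - d))\<^sup>2)
              \<le> g v' + ereal (inner (z (k - 1) + lam *\<^sub>R w (k - 1)) (C v' - d)
                          + lam / 2 * (norm (C v' - d))\<^sup>2)) \<and>
        (\<forall>u'. f (u k) + ereal (inner (z (k - 1) + lam *\<^sub>R (C (v k) - d)) (M (u k))
                          + lam / 2 * (norm (M (u k)))\<^sup>2)
              \<le> f u' + ereal (inner (z (k - 1) + lam *\<^sub>R (C (v k) - d)) (M u')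
                          + lam / 2 * (norm (M u'))\<^sup>2)) \<and>
        (norm (M (u k) + C (v k) - d) + norm (M (u k) - w (k - 1)) \<noteq> 0 \<longrightarrow>
          \<gamma> k = (lam * (norm (C (v k) - d + w (k - 1)))\<^sup>2
                   + lam * inner (d - C (v k) - M (u k)) (w (k - 1) - M (u k)))
                 / ((norm (M (u k) + C (v k) - d))\<^sup>2 + lam\<^sup>2 * (norm (M (u k) - w (k - 1)))\<^sup>2) \<and>
          1 - \<rho>bar \<le> \<rho> k \<and> \<rho> k \<le> 1 + \<rho>bar \<and>
          z k = z (k - 1) + (\<rho> k * \<gamma> k) *\<^sub>R (M (u k) + C (v k) - d) \<and>
          w k = w (k - 1) - (\<rho> k * \<gamma> k * lam) *\<^sub>R (w (k - 1) - M (u k)))"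
    and k: "1 \<le> k"
    and reach3: "\<forall>j\<in>{1..k}. norm (M (u j) + C (v j) - d) + norm (M (u j) - w (j - 1)) \<noteq> 0"
  shows "let x = z (k - 1) + lam *\<^sub>R w (k - 1) + lam *\<^sub>R (C (v k) - d);
             b = d - C (v k);
             y = x - lam *\<^sub>R (w (k - 1) - M (u k));
             a = - M (u k);
             al = (1::real)
         in b \<in> subdiff h2 x \<and> lam *\<^sub>R b + x = z (k - 1) + lam *\<^sub>R w (k - 1) \<and>
            a \<in> subdiff h1 y \<and>
            lam *\<^sub>R a + y = (1 - al) *\<^sub>R z (k - 1) + al *\<^sub>R x - lam *\<^sub>R w (k - 1) \<and>
            \<gamma> k = (inner (z (k - 1) - x) (b - w (k - 1)) + inner (z (k - 1) - y) (a + w (k - 1)))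
                   / ((norm (a + b))\<^sup>2 + (norm (x - y))\<^sup>2) \<and>
            z k = z (k - 1) - (\<rho> k * \<gamma> k) *\<^sub>R (a + b) \<and>
            w k = w (k - 1) - (\<rho> k * \<gamma> k) *\<^sub>R (x - y) \<and>
            lam / lam - (al / 2)\<^sup>2 > 0"
proof -
  define x where "x = z (k - 1) + lam *\<^sub>R w (k - 1) + lam *\<^sub>R (C (v k) - d)"
  define y where "y = x - lam *\<^sub>R (w (k - 1) - M (u k))"
  define a where "a = - M (u k)"
  define b where "b = d - C (v k)"
  have step: "norm (M (u k) + C (v k) - d) + norm (M (u k) - w (k - 1)) \<noteq> 0"
    using reach3 k by auto
  note iter = PMM[OF k] reach3 step
  have g': "proper_fun g" "convex (epigraph g)" and f': "proper_fun f" "convex (epigraph f)"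
    using f g by (simp_all add: proper_closed_convex_def)
  have "- adjoint C (z (k - 1) + lam *\<^sub>R w (k - 1) + lam *\<^sub>R (C (v k) - d)) \<in> subdiff g (v k)"
    by (rule subgradient_of_quadratic_minimizer[OF g' C, where T = "\<lambda>v. C v - d" and e = "- d"])
      (use iter in simp_all)
  then have "- C (v k) + d \<in> subdiff h2 x"
    unfolding h2 x_def by (intro subdiff_add_inner subdiff_comp_neg_adjoint[OF C] subdiff_fconj_if_subdiff)
  then have sub2: "b \<in> subdiff h2 x" by (simp add: b_def)
  have "- adjoint M (z (k - 1) + lam *\<^sub>R (C (v k) - d) + lam *\<^sub>R M (u k)) \<in> subdiff f (u k)"
    by (rule subgradient_of_quadratic_minimizer[OF f' M, where T = M and e = 0])
      (use iter in simp_all)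
  then have sub1: "a \<in> subdiff h1 y"
    unfolding h1 a_def by (intro subdiff_comp_neg_adjoint[OF M] subdiff_fconj_if_subdiff)
      (simp add: x_def y_def algebra_simps)
  have "\<gamma> k = (lam * (norm (C (v k) - d + w (k - 1)))\<^sup>2
                   + lam * inner (d - C (v k) - M (u k)) (w (k - 1) - M (u k)))
                 / ((norm (M (u k) + C (v k) - d))\<^sup>2 + lam\<^sup>2 * (norm (M (u k) - w (k - 1)))\<^sup>2)"
    using iter by simp
  also have "\<dots> = (lam * (norm (b - w (k - 1)))\<^sup>2 + lam * inner (a + b) (w (k - 1) + a))
                 / ((norm (a + b))\<^sup>2 + lam\<^sup>2 * (norm (w (k - 1) + a))\<^sup>2)"
    by (simp add: a_def b_def norm_minus_commute algebra_simps)
  also have "\<dots> = (inner (z (k - 1) - x) (b - w (k - 1)) + inner (z (k - 1) - y) (a + w (k - 1)))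
                     / ((norm (a + b))\<^sup>2 + (norm (x - y))\<^sup>2)"
    by (rule projective_stepsize_eq[symmetric]) (simp_all add: x_def y_def a_def b_def algebra_simps)
  finally have stepsize: "\<gamma> k = \<dots>" .
  have "z k = z (k - 1) + (\<rho> k * \<gamma> k) *\<^sub>R (M (u k) + C (v k) - d)"
    and "w k = w (k - 1) - (\<rho> k * \<gamma> k * lam) *\<^sub>R (w (k - 1) - M (u k))"
    using iter by simp_all
  then have updates: "z k = z (k - 1) - (\<rho> k * \<gamma> k) *\<^sub>R (a + b)"
    "w k = w (k - 1) - (\<rho> k * \<gamma> k) *\<^sub>R (x - y)"
    by (simp_all add: a_def b_def y_def algebra_simps)
  have resolvents: "lam *\<^sub>R b + x = z (k - 1) + lam *\<^sub>R w (k - 1)"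
    "lam *\<^sub>R a + y = (1 - 1) *\<^sub>R z (k - 1) + (1::real) *\<^sub>R x - lam *\<^sub>R w (k - 1)"
    by (simp_all add: x_def y_def a_def b_def algebra_simps)
  show ?thesis
    using sub1 sub2 stepsize updates resolvents lam
    unfolding Let_def x_def[symmetric] y_def[symmetric] a_def[symmetric] b_def[symmetric]
    by (simp add: power2_eq_square)
qed

end
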